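(* Let $\mathcal{S}=\{S(t,s):t\ge s\}$ and $\mathcal{T}=\{T(t,s):t\ge s\}$ be continuous linear evolution processes in a Banach space $X$ admitting nonuniform exponential dichotomies with projections $\{Q^{\mathcal{S}}(t)\}$ and $\{Q^{\mathcal{T}}(t)\}$, exponents $\alpha_{\mathcal{S}}$ and $\alpha_{\mathcal{T}}$, and the same bound $K(t)\le De^{\nu|t|}$. If $\nu<\min\{\alpha_{\mathcal{T}},\alpha_{\mathcal{S}}\}$ and $$\sup_{0\le t-s\le1}\{K(t)\|T(t,s)-S(t,s)\|_{\mathcal{L}(X)}\}\le\epsilon,$$ then $$\sup_{t\in\mathbb{R}}\{K(t)^{-1}\|Q^{\mathcal{T}}(t)-Q^{\mathcal{S}}(t)\|_{\mathcal{L}(X)}\}\le\frac{e^{-\alpha_{\mathcal{S}}}+e^{-\alpha_{\mathcal{T}}}}{1-e^{-(\alpha_{\mathcal{S}}+\alpha_{\mathcal{T}})}}\,\epsilon.$$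
   Context: A continuous evolution process in a Banach space $X$ is a family $\{S(t,s): t\ge s\}$ of continuous maps $X\to X$ with $S(t,t)=Id_X$, $S(t,s)S(s,\tau)=S(t,\tau)$ for $t\ge s\ge\tau$, and $(t,s,x)\mapsto S(t,s)x$ continuous on $\{t\ge s\}\times X$; it is linear if each $S(t,s)\in\mathcal{L}(X)$. A linear evolution process admits a nonuniform exponential dichotomy if there is a family of bounded projections $\{Q(t)\}_{t\in\mathbb{R}}$ with: (i) $Q(t)S(t,s)=S(t,s)Q(s)$ for $t\ge s$; (ii) $S(t,s)|_{R(Q(s))}:R(Q(s))\to R(Q(t))$ is an isomorphism for $t\ge s$, with inverse denoted $S(s,t)$; (iii) there are a continuous $K:\mathbb{R}\to[1,\infty)$ (bound) with $K(s)\le De^{\nu|s|}$ for constants $D\ge1$, $\nu\ge0$, and $\alpha>0$ (exponent) with $\|S(t,s)(Id_X-Q(s))\|\le K(s)e^{-\alpha(t-s)}$ for $t\ge s$ and $\|S(t,s)Q(s)\|\le K(s)e^{\alpha(t-s)}$ for $t<s$. *)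

theory Defs
  imports "HOL-Analysis.Analysis"
begin

text \<open>A continuous linear evolution process on the Banach space 'a. The operator
  S t s is only meaningful for t \<ge> s; its values for t < s are ignored.\<close>
definition linear_evolution_process :: "(real \<Rightarrow> real \<Rightarrow> ('a::banach \<Rightarrow>\<^sub>L 'a)) \<Rightarrow> bool" where
  "linear_evolution_process S \<longleftrightarrow>
     (\<forall>t. S t t = id_blinfun) \<and>
     (\<forall>t s \<tau>. \<tau> \<le> s \<and> s \<le> t \<longrightarrow> S t s o\<^sub>L S s \<tau> = S t \<tau>) \<and>
     continuous_on {(t, s, x). s \<le> t} (\<lambda>(t, s, x). blinfun_apply (S t s) x)"

text \<open>For t < s the operator S(t,s)Q(s) is the inverse of
  S(s,t) restricted to R(Q(t)) applied to Q(s)x; its norm bound is stated pointwise.\<close>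
definition nonuniform_exp_dichotomy ::
  "(real \<Rightarrow> real \<Rightarrow> ('a::banach \<Rightarrow>\<^sub>L 'a)) \<Rightarrow> (real \<Rightarrow> ('a \<Rightarrow>\<^sub>L 'a)) \<Rightarrow>
   (real \<Rightarrow> real) \<Rightarrow> real \<Rightarrow> real \<Rightarrow> real \<Rightarrow> bool" where
  "nonuniform_exp_dichotomy S Q K D \<nu> \<alpha> \<longleftrightarrow>
     (\<forall>t. Q t o\<^sub>L Q t = Q t) \<and>
     (\<forall>t s. s \<le> t \<longrightarrow> Q t o\<^sub>L S t s = S t s o\<^sub>L Q s) \<and>
     (\<forall>t s. s \<le> t \<longrightarrow> bij_betw (blinfun_apply (S t s)) (range (blinfun_apply (Q s)))
                                                 (range (blinfun_apply (Q t)))) \<and>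
     continuous_on UNIV K \<and> (\<forall>s. 1 \<le> K s \<and> K s \<le> D * exp (\<nu> * \<bar>s\<bar>)) \<and>
     D \<ge> 1 \<and> \<nu> \<ge> 0 \<and> \<alpha> > 0 \<and>
     (\<forall>t s. s \<le> t \<longrightarrow> norm (S t s o\<^sub>L (id_blinfun - Q s)) \<le> K s * exp (- \<alpha> * (t - s))) \<and>
     (\<forall>t s x y. t < s \<and> y \<in> range (blinfun_apply (Q t)) \<and> S s t y = Q s x \<longrightarrow>
                 norm y \<le> K s * exp (\<alpha> * (t - s)) * norm x)"

end

(* Split QT t - QS t = QT t (I - QS t) - (I - QT t) QS t.  For z = (I - QS t) x, telescope
   T(t+N,t) z - S(t+N,t) z into the one-step discrepancies (T - S)(t+n+1,t+n) S(t+n,t) z, project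
   with QT(t+N) and pull every piece back into the range of QT t along the invertible unstable part
   of T.  This writes QT t z as a sum of terms of size eps K(t) |x| e^(-aT) e^(-(aS+aT) n) plus a
   remainder of order e^((nu-aS-aT) N) |x|, which vanishes as N grows since nu < aS + aT.  The
   component (I - QT t) QS t x is treated in the same way, running forward from time t - N.  The two
   geometric series give the constant. *)

theory Submission
  imports Defs
begin

lemma evolution_process_comp_apply:
  assumes "linear_evolution_process S" "\<tau> \<le> s" "s \<le> t"
  shows "S t s (S s \<tau> x) = S t \<tau> x"
  using assms unfolding linear_evolution_process_def by (metis blinfun_apply_blinfun_compose)

lemma evolution_process_diag_apply: "linear_evolution_process S \<Longrightarrow> S t t x = x"
  unfolding linear_evolution_process_def by simp

lemma evolution_process_diff_telescope:
  assumes S: "linear_evolution_process S" and T: "linear_evolution_process T"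
  shows "T (a + real N) a x - S (a + real N) a x =
    (\<Sum>n<N. T (a + real N) (a + real n + 1)
        ((T (a + real n + 1) (a + real n) - S (a + real n + 1) (a + real n)) (S (a + real n) a x)))"
proof (induction N)
  case 0
  then show ?case using evolution_process_diag_apply[OF S] evolution_process_diag_apply[OF T] by simp
next
  case (Suc N)
  define b where "b = a + real N"
  have "T (b + 1) a x - S (b + 1) a x = T (b + 1) b (T b a x) - S (b + 1) b (S b a x)"
    using evolution_process_comp_apply[OF S, of a b "b + 1"]
      evolution_process_comp_apply[OF T, of a b "b + 1"] unfolding b_def by simp
  also have "\<dots> = T (b + 1) b (T b a x - S b a x) + (T (b + 1) b - S (b + 1) b) (S b a x)"
    by (simp add: blinfun.diff_right blinfun.diff_left)
  also have "T (b + 1) b (T b a x - S b a x) = (\<Sum>n<N. T (b + 1) (a + real n + 1)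
        ((T (a + real n + 1) (a + real n) - S (a + real n + 1) (a + real n)) (S (a + real n) a x)))"
    unfolding Suc[folded b_def] blinfun.sum_right
    by (intro sum.cong refl evolution_process_comp_apply[OF T]) (auto simp: b_def)
  finally show ?case
    unfolding Suc_eq_plus1 of_nat_add of_nat_1 add.assoc[symmetric] b_def
    using evolution_process_diag_apply[OF T] by simp
qed

lemma dichotomy_facts:
  assumes "nonuniform_exp_dichotomy S Q K D \<nu> \<alpha>"
  shows dichotomy_proj_idem: "Q t (Q t x) = Q t x"
    and dichotomy_proj_comm: "s \<le> t \<Longrightarrow> Q t (S t s x) = S t s (Q s x)"
    and dichotomy_bij: "s \<le> t \<Longrightarrow>
      bij_betw (blinfun_apply (S t s)) (range (blinfun_apply (Q s))) (range (blinfun_apply (Q t)))"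
    and dichotomy_bound_ge_1: "1 \<le> K s"
    and dichotomy_bound_le: "K s \<le> D * exp (\<nu> * \<bar>s\<bar>)"
    and dichotomy_D_ge_1: "D \<ge> 1"
    and dichotomy_nu_nonneg: "\<nu> \<ge> 0"
    and dichotomy_exponent_pos: "\<alpha> > 0"
    and dichotomy_stable_bound:
      "s \<le> t \<Longrightarrow> norm (S t s (x - Q s x)) \<le> K s * exp (- \<alpha> * (t - s)) * norm x"
    and dichotomy_unstable_bound: "t < s \<Longrightarrow> y \<in> range (blinfun_apply (Q t)) \<Longrightarrow>
      S s t y = Q s z \<Longrightarrow> norm y \<le> K s * exp (\<alpha> * (t - s)) * norm z"
proof -
  note d = assms[unfolded nonuniform_exp_dichotomy_def]
  show "Q t (Q t x) = Q t x" "s \<le> t \<Longrightarrow> Q t (S t s x) = S t s (Q s x)"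
    using d by (metis blinfun_apply_blinfun_compose)+
  show "s \<le> t \<Longrightarrow>
      bij_betw (blinfun_apply (S t s)) (range (blinfun_apply (Q s))) (range (blinfun_apply (Q t)))"
    "t < s \<Longrightarrow> y \<in> range (blinfun_apply (Q t)) \<Longrightarrow> S s t y = Q s z \<Longrightarrow>
      norm y \<le> K s * exp (\<alpha> * (t - s)) * norm z"
    using d by blast+
  show "1 \<le> K s" "K s \<le> D * exp (\<nu> * \<bar>s\<bar>)" "D \<ge> 1" "\<nu> \<ge> 0" "\<alpha> > 0"
    using d by auto
  assume "s \<le> t"
  have "norm (S t s (x - Q s x)) = norm ((S t s o\<^sub>L (id_blinfun - Q s)) x)"
    by (simp add: blinfun.diff_left)
  also have "\<dots> \<le> norm (S t s o\<^sub>L (id_blinfun - Q s)) * norm x"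
    by (rule norm_blinfun)
  also have "\<dots> \<le> K s * exp (- \<alpha> * (t - s)) * norm x"
    using d \<open>s \<le> t\<close> by (intro mult_right_mono) auto
  finally show "norm (S t s (x - Q s x)) \<le> K s * exp (- \<alpha> * (t - s)) * norm x" .
qed

lemma dichotomy_range_fixed:
  assumes "nonuniform_exp_dichotomy S Q K D \<nu> \<alpha>" "v \<in> range (blinfun_apply (Q t))"
  shows "Q t v = v"
  using assms(2) dichotomy_proj_idem[OF assms(1)] by auto

lemma dichotomy_maps_range:
  assumes "nonuniform_exp_dichotomy S Q K D \<nu> \<alpha>" "y \<in> range (blinfun_apply (Q t))" "t \<le> s"
  shows "S s t y \<in> range (blinfun_apply (Q s))"
  using bij_betw_apply[OF dichotomy_bij[OF assms(1,3)] assms(2)] .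

lemma dichotomy_inj_on_range:
  assumes "nonuniform_exp_dichotomy S Q K D \<nu> \<alpha>" "t \<le> s"
    and "y \<in> range (blinfun_apply (Q t))" "y' \<in> range (blinfun_apply (Q t))" "S s t y = S s t y'"
  shows "y = y'"
  using inj_onD[OF bij_betw_imp_inj_on[OF dichotomy_bij[OF assms(1,2)]] assms(5,3,4)] .

(* The dichotomy provides the backward map S(t,s) Q(s), t < s, only implicitly, through the
   bijection between the ranges of the projections. *)
lemma dichotomy_unstable_preimage:
  assumes d: "nonuniform_exp_dichotomy S Q K D \<nu> \<alpha>" and "t < s"
  obtains y where "y \<in> range (blinfun_apply (Q t))" "S s t y = Q s v"
    "norm y \<le> K s * exp (\<alpha> * (t - s)) * norm v"
proof -
  have "Q s v \<in> blinfun_apply (S s t) ` range (blinfun_apply (Q t))"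
    unfolding bij_betw_imp_surj_on[OF dichotomy_bij[OF d less_imp_le[OF \<open>t < s\<close>]]] by (rule rangeI)
  then obtain y where y: "y \<in> range (blinfun_apply (Q t))" "S s t y = Q s v"
    by (metis imageE)
  show thesis using that[OF y dichotomy_unstable_bound[OF d \<open>t < s\<close> y]] .
qed

lemma dichotomy_bound_growth:
  assumes d: "nonuniform_exp_dichotomy S Q K D \<nu> \<alpha>" and "\<bar>s - t\<bar> = real N"
  shows "K s * exp (- \<beta> * real N) \<le> D * exp (\<nu> * \<bar>t\<bar>) * exp (\<nu> - \<beta>) ^ N"
proof -
  have "\<bar>s\<bar> \<le> \<bar>t\<bar> + real N" using assms(2) by arith
  then have "\<nu> * \<bar>s\<bar> \<le> \<nu> * \<bar>t\<bar> + \<nu> * real N"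
    using dichotomy_nu_nonneg[OF d] by (metis distrib_left mult_left_mono)
  then have exp_le: "exp (\<nu> * \<bar>s\<bar>) * exp (- \<beta> * real N) \<le> exp (\<nu> * \<bar>t\<bar>) * exp (\<nu> - \<beta>) ^ N"
    by (simp add: mult_exp_exp exp_of_nat_mult[symmetric] algebra_simps)
  have "K s * exp (- \<beta> * real N) \<le> D * exp (\<nu> * \<bar>s\<bar>) * exp (- \<beta> * real N)"
    using dichotomy_bound_le[OF d, of s] by (intro mult_right_mono) auto
  also have "\<dots> \<le> D * (exp (\<nu> * \<bar>t\<bar>) * exp (\<nu> - \<beta>) ^ N)"
    using exp_le dichotomy_D_ge_1[OF d]
    by (simp add: mult.assoc mult_left_mono)
  finally show ?thesis by (simp add: mult.assoc)
qed

lemma exp_mult_geometric: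
  fixes a b :: real
  shows "exp (- a * (real k + 1)) * exp (- b * real k) = exp (- a) * exp (- (a + b)) ^ k"
  by (simp add: exp_of_nat_mult[symmetric] mult_exp_exp algebra_simps)

lemma le_geometric_limit:
  fixes A B C q r :: real
  assumes "\<And>N. N > 0 \<Longrightarrow> A \<le> B * (\<Sum>n<N. q ^ n) + C * r ^ N"
    and "0 \<le> B" "0 \<le> q" "q < 1" "\<bar>r\<bar> < 1"
  shows "A \<le> B / (1 - q)"
proof (rule LIMSEQ_le_const)
  show "(\<lambda>N. B / (1 - q) + C * r ^ N) \<longlonglongrightarrow> B / (1 - q)"
    using tendsto_add[OF tendsto_const tendsto_mult_right_zero[OF LIMSEQ_power_zero[of r]]]
      \<open>\<bar>r\<bar> < 1\<close> by simp
  have "(\<Sum>n<N. q ^ n) \<le> 1 / (1 - q)" for N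
    using assms(3,4) sum_gp_strict[of q N] by (auto intro: divide_right_mono)
  then have "B * (\<Sum>n<N. q ^ n) \<le> B / (1 - q)" for N
    using mult_left_mono[OF _ \<open>0 \<le> B\<close>] by fastforce
  then show "\<exists>N0. \<forall>N\<ge>N0. A \<le> B / (1 - q) + C * r ^ N"
    using assms(1) by (intro exI[of _ 1] allI impI) (smt (verit) One_nat_def Suc_le_eq)
qed

locale close_dichotomies =
  fixes S T :: "real \<Rightarrow> real \<Rightarrow> ('a::banach \<Rightarrow>\<^sub>L 'a)"
    and QS QT :: "real \<Rightarrow> ('a \<Rightarrow>\<^sub>L 'a)"
    and K :: "real \<Rightarrow> real"
    and D \<nu> \<alpha>S \<alpha>T \<epsilon> :: real
  assumes S: "linear_evolution_process S" and T: "linear_evolution_process T"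
    and dS: "nonuniform_exp_dichotomy S QS K D \<nu> \<alpha>S"
    and dT: "nonuniform_exp_dichotomy T QT K D \<nu> \<alpha>T"
    and close: "\<forall>t s. 0 \<le> t - s \<and> t - s \<le> 1 \<longrightarrow> K t * norm (T t s - S t s) \<le> \<epsilon>"
begin

definition step_gap :: "real \<Rightarrow> 'a \<Rightarrow>\<^sub>L 'a" where
  "step_gap s = T (s + 1) s - S (s + 1) s"

lemma close_nonneg: "0 \<le> \<epsilon>"
proof -
  have "0 \<le> K 0 * norm (T 0 0 - S 0 0)"
    using dichotomy_bound_ge_1[OF dS, of 0] by simp
  then show ?thesis using close[rule_format, of 0 0] by linarith
qed

lemma step_gap_bound: "K (s + 1) * norm (step_gap s v) \<le> \<epsilon> * norm v"
proof -
  have "K (s + 1) * norm (step_gap s v) \<le> K (s + 1) * (norm (step_gap s) * norm v)"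
    using dichotomy_bound_ge_1[OF dT, of "s + 1"] by (intro mult_left_mono norm_blinfun) auto
  also have "\<dots> \<le> \<epsilon> * norm v"
    using close[rule_format, of "s + 1" s] unfolding step_gap_def mult.assoc[symmetric]
    by (intro mult_right_mono) auto
  finally show ?thesis .
qed

lemma diff_telescope:
  "T (a + real N) a x - S (a + real N) a x =
    (\<Sum>n<N. T (a + real N) (a + real n + 1) (step_gap (a + real n) (S (a + real n) a x)))"
  unfolding step_gap_def by (rule evolution_process_diff_telescope[OF S T])

lemma unstable_part_decomposition:
  assumes c: "c \<in> range (blinfun_apply (QT t))"
      "T (t + real N) t c = QT (t + real N) (S (t + real N) t z)"
    and y: "\<And>n. y n \<in> range (blinfun_apply (QT t))"
      "\<And>n. T (t + real n + 1) t (y n) = QT (t + real n + 1) (step_gap (t + real n) (S (t + real n) t z))"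
  shows "QT t z = c + (\<Sum>n<N. y n)"
proof (rule dichotomy_inj_on_range[OF dT, of t "t + real N"])
  have "QT t (c + (\<Sum>n<N. y n)) = c + (\<Sum>n<N. y n)"
    unfolding blinfun.add_right blinfun.sum_right
    using dichotomy_range_fixed[OF dT c(1)] dichotomy_range_fixed[OF dT y(1)] by simp
  then show "c + (\<Sum>n<N. y n) \<in> range (blinfun_apply (QT t))" by (metis rangeI)
  have "T (t + real N) t (QT t z) = QT (t + real N) (T (t + real N) t z)"
    using dichotomy_proj_comm[OF dT, of t "t + real N" z] by simp
  also have "T (t + real N) t z = S (t + real N) t z +
      (\<Sum>n<N. T (t + real N) (t + real n + 1) (step_gap (t + real n) (S (t + real n) t z)))"
    using diff_telescope[of t N z] by (simp add: algebra_simps)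
  also have "QT (t + real N) \<dots> = T (t + real N) t c +
      (\<Sum>n<N. T (t + real N) (t + real n + 1) (QT (t + real n + 1) (step_gap (t + real n) (S (t + real n) t z))))"
    unfolding blinfun.add_right blinfun.sum_right c(2)
    by (intro arg_cong2[where f="(+)"] refl sum.cong dichotomy_proj_comm[OF dT]) auto
  also have "\<dots> = T (t + real N) t (c + (\<Sum>n<N. y n))"
    unfolding y(2)[symmetric] blinfun.add_right blinfun.sum_right
    by (intro arg_cong2[where f="(+)"] refl sum.cong evolution_process_comp_apply[OF T]) auto
  finally show "T (t + real N) t (QT t z) = T (t + real N) t (c + (\<Sum>n<N. y n))" .
qed (auto simp: c)

lemma unstable_correction_bound:
  assumes y: "y \<in> range (blinfun_apply (QT t))"
      "T (s + 1) t y = QT (s + 1) (step_gap s (S s t (x - QS t x)))"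
    and "t \<le> s"
  shows "norm y \<le> \<epsilon> * K t * norm x * (exp (- \<alpha>T * (s + 1 - t)) * exp (- \<alpha>S * (s - t)))"
proof -
  have "norm y \<le> K (s + 1) * exp (\<alpha>T * (t - (s + 1))) * norm (step_gap s (S s t (x - QS t x)))"
    using dichotomy_unstable_bound[OF dT _ y] \<open>t \<le> s\<close> by simp
  also have "\<dots> = exp (- \<alpha>T * (s + 1 - t)) * (K (s + 1) * norm (step_gap s (S s t (x - QS t x))))"
    by (simp add: algebra_simps)
  also have "\<dots> \<le> exp (- \<alpha>T * (s + 1 - t)) * (\<epsilon> * norm (S s t (x - QS t x)))"
    by (intro mult_left_mono step_gap_bound) auto
  also have "\<dots> \<le> exp (- \<alpha>T * (s + 1 - t)) * (\<epsilon> * (K t * exp (- \<alpha>S * (s - t)) * norm x))"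
    using dichotomy_stable_bound[OF dS \<open>t \<le> s\<close>] close_nonneg by (intro mult_left_mono) auto
  finally show ?thesis by (simp add: algebra_simps)
qed

lemma unstable_remainder_bound:
  assumes c: "c \<in> range (blinfun_apply (QT t))"
      "T (t + real N) t c = QT (t + real N) (S (t + real N) t (x - QS t x))"
    and "N > 0"
  shows "norm c \<le> D * exp (\<nu> * \<bar>t\<bar>) * K t * norm x * exp (\<nu> - (\<alpha>S + \<alpha>T)) ^ N"
proof -
  have "norm c \<le> K (t + real N) * exp (\<alpha>T * (t - (t + real N))) * norm (S (t + real N) t (x - QS t x))"
    using dichotomy_unstable_bound[OF dT _ c] \<open>N > 0\<close> by simp
  also have "\<dots> = K (t + real N) * exp (- \<alpha>T * real N) * norm (S (t + real N) t (x - QS t x))"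
    by simp
  also have "\<dots> \<le> K (t + real N) * exp (- \<alpha>T * real N) * (K t * exp (- \<alpha>S * real N) * norm x)"
    using dichotomy_stable_bound[OF dS, of t "t + real N" x] dichotomy_bound_ge_1[OF dT, of "t + real N"]
    by (intro mult_left_mono) auto
  also have "\<dots> = K (t + real N) * exp (- (\<alpha>S + \<alpha>T) * real N) * (K t * norm x)"
    by (simp add: mult_exp_exp algebra_simps)
  also have "\<dots> \<le> D * exp (\<nu> * \<bar>t\<bar>) * exp (\<nu> - (\<alpha>S + \<alpha>T)) ^ N * (K t * norm x)"
    by (rule mult_right_mono[OF dichotomy_bound_growth[OF dT]])
      (use dichotomy_bound_ge_1[OF dS, of t] in auto)
  finally show ?thesis by (simp add: algebra_simps)
qed

(* N > 0 because the unstable estimate of a dichotomy is only available for t < s. *)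
lemma unstable_part_of_stable_finite_bound:
  assumes "N > 0"
  shows "norm (QT t (x - QS t x)) \<le>
    \<epsilon> * K t * norm x * exp (- \<alpha>T) * (\<Sum>n<N. exp (- (\<alpha>S + \<alpha>T)) ^ n) +
    D * exp (\<nu> * \<bar>t\<bar>) * K t * norm x * exp (\<nu> - (\<alpha>S + \<alpha>T)) ^ N"
proof -
  define z where "z = x - QS t x"
  have "\<exists>y. y \<in> range (blinfun_apply (QT t)) \<and>
      T (t + real n + 1) t y = QT (t + real n + 1) (step_gap (t + real n) (S (t + real n) t z))" for n
    by (rule dichotomy_unstable_preimage[OF dT, of t "t + real n + 1"]) auto
  then obtain y where y: "\<And>n. y n \<in> range (blinfun_apply (QT t))"
      "\<And>n. T (t + real n + 1) t (y n) = QT (t + real n + 1) (step_gap (t + real n) (S (t + real n) t z))"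
    by metis
  obtain c where c: "c \<in> range (blinfun_apply (QT t))"
      "T (t + real N) t c = QT (t + real N) (S (t + real N) t z)"
    by (rule dichotomy_unstable_preimage[OF dT, of t "t + real N"]) (use assms in auto)
  have "norm (QT t z) \<le> norm c + (\<Sum>n<N. norm (y n))"
    unfolding unstable_part_decomposition[OF c y]
    by (rule order_trans[OF norm_triangle_ineq add_left_mono[OF norm_sum]])
  also have "(\<Sum>n<N. norm (y n)) \<le> (\<Sum>n<N. \<epsilon> * K t * norm x * exp (- \<alpha>T) * exp (- (\<alpha>S + \<alpha>T)) ^ n)"
  proof (rule sum_mono)
    fix n
    have "norm (y n) \<le> \<epsilon> * K t * norm x * (exp (- \<alpha>T * (real n + 1)) * exp (- \<alpha>S * real n))"
      using unstable_correction_bound[OF y(1) y(2)[unfolded z_def], of n] by simp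
    then show "norm (y n) \<le> \<epsilon> * K t * norm x * exp (- \<alpha>T) * exp (- (\<alpha>S + \<alpha>T)) ^ n"
      unfolding exp_mult_geometric by (simp add: add.commute mult.assoc)
  qed
  finally show ?thesis
    using unstable_remainder_bound[OF c[unfolded z_def] assms]
    unfolding z_def sum_distrib_left[symmetric] by linarith
qed

lemma stable_part_decomposition:
  "S (a + real N) a w - QT (a + real N) (S (a + real N) a w) =
    T (a + real N) a (w - QT a w) -
    (\<Sum>n<N. T (a + real N) (a + real n + 1)
      (step_gap (a + real n) (S (a + real n) a w) -
       QT (a + real n + 1) (step_gap (a + real n) (S (a + real n) a w))))"
proof -
  define t where "t = a + real N"
  define f where "f n = step_gap (a + real n) (S (a + real n) a w)" for n
  have comm: "T t r y - QT t (T t r y) = T t r (y - QT r y)" if "r \<le> t" for r y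
    using dichotomy_proj_comm[OF dT that] by (simp add: blinfun.diff_right)
  have "S t a w = T t a w - (\<Sum>n<N. T t (a + real n + 1) (f n))"
    using diff_telescope[of a N w] unfolding t_def f_def by (simp add: algebra_simps)
  then have "S t a w - QT t (S t a w) = (T t a w - QT t (T t a w)) -
      (\<Sum>n<N. T t (a + real n + 1) (f n) - QT t (T t (a + real n + 1) (f n)))"
    by (simp add: blinfun.diff_right blinfun.sum_right sum_subtractf)
  also have "\<dots> = T t a (w - QT a w) - (\<Sum>n<N. T t (a + real n + 1) (f n - QT (a + real n + 1) (f n)))"
    using comm by (intro arg_cong2[where f="(-)"] comm sum.cong refl) (auto simp: t_def)
  finally show ?thesis unfolding t_def f_def .
qed

lemma stable_correction_bound:
  assumes g: "g \<in> range (blinfun_apply (QS s))" "S t s g = QS t x" and "s + 1 \<le> t"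
  shows "norm (T t (s + 1) (step_gap s g - QT (s + 1) (step_gap s g)))
    \<le> \<epsilon> * K t * norm x * (exp (- \<alpha>S * (t - s)) * exp (- \<alpha>T * (t - (s + 1))))"
proof -
  have "norm (T t (s + 1) (step_gap s g - QT (s + 1) (step_gap s g)))
      \<le> K (s + 1) * exp (- \<alpha>T * (t - (s + 1))) * norm (step_gap s g)"
    using dichotomy_stable_bound[OF dT \<open>s + 1 \<le> t\<close>] .
  also have "\<dots> = exp (- \<alpha>T * (t - (s + 1))) * (K (s + 1) * norm (step_gap s g))"
    by (simp add: algebra_simps)
  also have "\<dots> \<le> exp (- \<alpha>T * (t - (s + 1))) * (\<epsilon> * norm g)"
    by (intro mult_left_mono step_gap_bound) auto
  also have "\<dots> \<le> exp (- \<alpha>T * (t - (s + 1))) * (\<epsilon> * (K t * exp (\<alpha>S * (s - t)) * norm x))"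
    using dichotomy_unstable_bound[OF dS _ g] \<open>s + 1 \<le> t\<close> close_nonneg
    by (intro mult_left_mono) auto
  finally show ?thesis by (simp add: algebra_simps)
qed

lemma stable_remainder_bound:
  assumes "norm w \<le> K (a + real N) * exp (- \<alpha>S * real N) * norm x"
  shows "norm (T (a + real N) a (w - QT a w))
    \<le> D * exp (\<nu> * \<bar>a + real N\<bar>) * K (a + real N) * norm x * exp (\<nu> - (\<alpha>S + \<alpha>T)) ^ N"
proof -
  have "norm (T (a + real N) a (w - QT a w)) \<le> K a * exp (- \<alpha>T * real N) * norm w"
    using dichotomy_stable_bound[OF dT, of a "a + real N" w] by simp
  also have "\<dots> \<le> K a * exp (- \<alpha>T * real N) * (K (a + real N) * exp (- \<alpha>S * real N) * norm x)"
    using assms dichotomy_bound_ge_1[OF dT, of a] by (intro mult_left_mono) auto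
  also have "\<dots> = K a * exp (- (\<alpha>S + \<alpha>T) * real N) * (K (a + real N) * norm x)"
    by (simp add: mult_exp_exp algebra_simps)
  also have "\<dots> \<le> D * exp (\<nu> * \<bar>a + real N\<bar>) * exp (\<nu> - (\<alpha>S + \<alpha>T)) ^ N * (K (a + real N) * norm x)"
    by (rule mult_right_mono[OF dichotomy_bound_growth[OF dT]])
      (use dichotomy_bound_ge_1[OF dS, of "a + real N"] in auto)
  finally show ?thesis by (simp add: algebra_simps)
qed

lemma stable_part_of_unstable_finite_bound:
  assumes "N > 0"
  shows "norm (QS t x - QT t (QS t x)) \<le>
    \<epsilon> * K t * norm x * exp (- \<alpha>S) * (\<Sum>n<N. exp (- (\<alpha>S + \<alpha>T)) ^ n) +
    D * exp (\<nu> * \<bar>t\<bar>) * K t * norm x * exp (\<nu> - (\<alpha>S + \<alpha>T)) ^ N"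
proof -
  define a where "a = t - real N"
  have t: "t = a + real N" unfolding a_def by simp
  obtain w where w: "w \<in> range (blinfun_apply (QS a))" "S t a w = QS t x"
      "norm w \<le> K t * exp (\<alpha>S * (a - t)) * norm x"
    by (rule dichotomy_unstable_preimage[OF dS, of a t]) (use assms a_def in auto)
  define f where "f n = step_gap (a + real n) (S (a + real n) a w)" for n
  have "QS t x - QT t (QS t x) =
      T t a (w - QT a w) - (\<Sum>n<N. T t (a + real n + 1) (f n - QT (a + real n + 1) (f n)))"
    using stable_part_decomposition[of a N w] unfolding t[symmetric] w(2) f_def .
  then have "norm (QS t x - QT t (QS t x)) \<le>
      norm (T t a (w - QT a w)) + (\<Sum>n<N. norm (T t (a + real n + 1) (f n - QT (a + real n + 1) (f n))))"
    by (rule order_trans[OF ord_eq_le_trans[OF arg_cong[where f=norm] norm_triangle_ineq4]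
      add_left_mono[OF norm_sum]])
  also have "(\<Sum>n<N. norm (T t (a + real n + 1) (f n - QT (a + real n + 1) (f n))))
      \<le> (\<Sum>n<N. \<epsilon> * K t * norm x * exp (- \<alpha>S) * exp (- (\<alpha>S + \<alpha>T)) ^ (N - Suc n))"
  proof (rule sum_mono)
    fix n assume "n \<in> {..<N}"
    then have n: "t - (a + real n) = real (N - Suc n) + 1" using t by (simp add: of_nat_diff)
    have "S (a + real n) a w \<in> range (blinfun_apply (QS (a + real n)))"
      using dichotomy_maps_range[OF dS w(1)] by simp
    moreover have "S t (a + real n) (S (a + real n) a w) = QS t x"
      using evolution_process_comp_apply[OF S, of a "a + real n" t w] w(2) n by simp
    ultimately have "norm (T t (a + real n + 1) (f n - QT (a + real n + 1) (f n))) \<le>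
        \<epsilon> * K t * norm x * (exp (- \<alpha>S * (real (N - Suc n) + 1)) * exp (- \<alpha>T * real (N - Suc n)))"
      using stable_correction_bound[of "S (a + real n) a w" "a + real n" t x] n
      unfolding f_def by (simp add: diff_diff_eq[symmetric])
    then show "norm (T t (a + real n + 1) (f n - QT (a + real n + 1) (f n)))
        \<le> \<epsilon> * K t * norm x * exp (- \<alpha>S) * exp (- (\<alpha>S + \<alpha>T)) ^ (N - Suc n)"
      unfolding exp_mult_geometric by (simp add: mult.assoc)
  qed
  finally show ?thesis
    using stable_remainder_bound[of w a N x] w(3) unfolding t[symmetric] sum.nat_diff_reindex
      sum_distrib_left[symmetric] by (simp add: a_def)
qed

lemma unstable_part_of_stable_bound:
  assumes "\<nu> < \<alpha>S + \<alpha>T"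
  shows "norm (QT t (x - QS t x)) \<le> \<epsilon> * K t * norm x * exp (- \<alpha>T) / (1 - exp (- (\<alpha>S + \<alpha>T)))"
  by (rule le_geometric_limit[OF unstable_part_of_stable_finite_bound])
    (use assms close_nonneg dichotomy_bound_ge_1[OF dS, of t] dichotomy_exponent_pos[OF dS]
      dichotomy_exponent_pos[OF dT] in auto)

lemma stable_part_of_unstable_bound:
  assumes "\<nu> < \<alpha>S + \<alpha>T"
  shows "norm (QS t x - QT t (QS t x)) \<le> \<epsilon> * K t * norm x * exp (- \<alpha>S) / (1 - exp (- (\<alpha>S + \<alpha>T)))"
  by (rule le_geometric_limit[OF stable_part_of_unstable_finite_bound])
    (use assms close_nonneg dichotomy_bound_ge_1[OF dS, of t] dichotomy_exponent_pos[OF dS]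
      dichotomy_exponent_pos[OF dT] in auto)

lemma norm_proj_diff_le:
  assumes "\<nu> < \<alpha>S + \<alpha>T"
  shows "norm (QT t - QS t) \<le> \<epsilon> * K t * ((exp (- \<alpha>S) + exp (- \<alpha>T)) / (1 - exp (- (\<alpha>S + \<alpha>T))))"
proof (rule norm_blinfun_bound)
  have "exp (- (\<alpha>S + \<alpha>T)) < 1"
    using dichotomy_exponent_pos[OF dS] dichotomy_exponent_pos[OF dT] by simp
  then show "0 \<le> \<epsilon> * K t * ((exp (- \<alpha>S) + exp (- \<alpha>T)) / (1 - exp (- (\<alpha>S + \<alpha>T))))"
    using close_nonneg dichotomy_bound_ge_1[OF dS, of t] by simp
  fix x
  have "(QT t - QS t) x = QT t (x - QS t x) - (QS t x - QT t (QS t x))"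
    by (simp add: blinfun.diff_left blinfun.diff_right)
  then have "norm ((QT t - QS t) x) \<le> norm (QT t (x - QS t x)) + norm (QS t x - QT t (QS t x))"
    by (simp add: norm_triangle_ineq4)
  also have "\<dots> \<le> \<epsilon> * K t * norm x * exp (- \<alpha>T) / (1 - exp (- (\<alpha>S + \<alpha>T))) +
      \<epsilon> * K t * norm x * exp (- \<alpha>S) / (1 - exp (- (\<alpha>S + \<alpha>T)))"
    by (intro add_mono unstable_part_of_stable_bound stable_part_of_unstable_bound assms)
  also have "\<dots> = \<epsilon> * K t * ((exp (- \<alpha>S) + exp (- \<alpha>T)) / (1 - exp (- (\<alpha>S + \<alpha>T)))) * norm x"
    by (simp add: add_divide_distrib algebra_simps)
  finally show "norm ((QT t - QS t) x) \<le>
      \<epsilon> * K t * ((exp (- \<alpha>S) + exp (- \<alpha>T)) / (1 - exp (- (\<alpha>S + \<alpha>T)))) * norm x" .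
qed

end

theorem mainTheorem5:
  fixes S T :: "real \<Rightarrow> real \<Rightarrow> ('a::banach \<Rightarrow>\<^sub>L 'a)"
    and QS QT :: "real \<Rightarrow> ('a \<Rightarrow>\<^sub>L 'a)"
    and K :: "real \<Rightarrow> real"
    and D \<nu> \<alpha>S \<alpha>T \<epsilon> :: real
  assumes "linear_evolution_process S" and "linear_evolution_process T"
    and "nonuniform_exp_dichotomy S QS K D \<nu> \<alpha>S"
    and "nonuniform_exp_dichotomy T QT K D \<nu> \<alpha>T"
    and "\<nu> < min \<alpha>T \<alpha>S"
    and "\<forall>t s. 0 \<le> t - s \<and> t - s \<le> 1 \<longrightarrow> K t * norm (T t s - S t s) \<le> \<epsilon>"
  shows "\<forall>t. inverse (K t) * norm (QT t - QS t)
           \<le> (exp (- \<alpha>S) + exp (- \<alpha>T)) / (1 - exp (- (\<alpha>S + \<alpha>T))) * \<epsilon>"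
proof
  fix t
  interpret close_dichotomies S T QS QT K D \<nu> \<alpha>S \<alpha>T \<epsilon>
    using assms(1-4,6) by unfold_locales
  have "\<nu> < \<alpha>S + \<alpha>T"
    using assms(5) dichotomy_exponent_pos[OF dS] dichotomy_exponent_pos[OF dT] by linarith
  then have "inverse (K t) * norm (QT t - QS t) \<le>
      inverse (K t) * (\<epsilon> * K t * ((exp (- \<alpha>S) + exp (- \<alpha>T)) / (1 - exp (- (\<alpha>S + \<alpha>T)))))"
    using norm_proj_diff_le dichotomy_bound_ge_1[OF dS, of t] by (intro mult_left_mono) auto
  also have "\<dots> = (exp (- \<alpha>S) + exp (- \<alpha>T)) / (1 - exp (- (\<alpha>S + \<alpha>T))) * \<epsilon>"
    using dichotomy_bound_ge_1[OF dS, of t] by simp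
  finally show "inverse (K t) * norm (QT t - QS t)
      \<le> (exp (- \<alpha>S) + exp (- \<alpha>T)) / (1 - exp (- (\<alpha>S + \<alpha>T))) * \<epsilon>" .
qed

end
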